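(* Let $U_2>0$ and constants $k_1,k_2$ with $k_1>k_2-1>0$. Consider the system $$\dot e_\psi=e_r,\qquad \dot e_r=-e_r-U_2\,\sigma\!\left(\frac{k_1}{U_2}e_\psi+\frac{k_2-1}{U_2}e_r\right),$$ where $\sigma(t)=\frac{t}{\max(1,|t|)}$. Then for every solution, after a sufficiently large (finite) time the saturation operates in its linear region, i.e. $\left|\frac{k_1}{U_2}e_\psi+\frac{k_2-1}{U_2}e_r\right|\le 1$, and $(e_\psi,e_r)$ converges exponentially to zero. *)

theory Defs
  imports "HOL-Analysis.Analysis"
begin

definition sat :: "real \<Rightarrow> real" where
  "sat t = t / max 1 \<bar>t\<bar>"

end

theory Submission
  imports Defs
begin

text \<open>
  Write \<open>z = (a x + b y) / U\<close> for the argument of the saturation and let \<open>huber\<close> be the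
  primitive of \<open>sat\<close>. Along solutions the function \<open>V = U\<^sup>2/a \<cdot> huber z + y\<^sup>2/2\<close> satisfies
  \<open>V' = - y\<^sup>2 - \<beta> u y - \<beta> u\<^sup>2\<close> with \<open>u = U \<cdot> sat z\<close> and \<open>\<beta> = b/a \<in> (0,1)\<close>, hence
  \<open>V' \<le> - y\<^sup>2/2 - \<beta> u\<^sup>2/2\<close>. In the linear region \<open>|z| \<le> 1\<close> this is at most \<open>- min 1 b \<cdot> V\<close>;
  in the saturated region it is at most \<open>- \<beta> U\<^sup>2/2\<close>, which dominates a multiple of \<open>V\<close> because
  \<open>V\<close> never exceeds \<open>V 0\<close>. So \<open>V\<close> decays exponentially. Since \<open>huber z > 1/2\<close> outside the
  linear region, \<open>z\<close> eventually enters it; and on the bounded sublevel set \<open>V \<le> V 0\<close> the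
  function \<open>V\<close> dominates a multiple of \<open>x\<^sup>2 + y\<^sup>2\<close>, giving exponential decay of the state.
\<close>

lemma sat_eq_self: "\<bar>w\<bar> \<le> 1 \<Longrightarrow> sat w = w"
  by (simp add: sat_def max_def)

lemma sat_squared_eq_1: "\<bar>w\<bar> > 1 \<Longrightarrow> (sat w)\<^sup>2 = 1"
  by (simp add: sat_def max_def power_divide)

lemma sat_minus: "sat (- w) = - sat w"
  by (simp add: sat_def)

definition huber :: "real \<Rightarrow> real" where
  "huber w = (if \<bar>w\<bar> \<le> 1 then w\<^sup>2 / 2 else \<bar>w\<bar> - 1 / 2)"

lemma huber_nonneg: "huber w \<ge> 0"
  by (simp add: huber_def)

lemma huber_minus: "huber (- w) = huber w"
  by (simp add: huber_def)

lemma abs_le_huber_plus_1: "\<bar>w\<bar> \<le> huber w + 1"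
  unfolding huber_def using zero_le_power2[of w] by (split if_split) linarith

lemma abs_le_1_if_huber_le: "huber w \<le> 1 / 2 \<Longrightarrow> \<bar>w\<bar> \<le> 1"
  by (auto simp: huber_def split: if_splits)

lemma huber_ge_scaled_square:
  assumes "\<bar>w\<bar> \<le> R" "1 \<le> R"
  shows "w\<^sup>2 / (2 * R) \<le> huber w"
proof (cases "\<bar>w\<bar> \<le> 1")
  case True
  then have "w\<^sup>2 / (2 * R) \<le> w\<^sup>2 / 2"
    using assms by (intro divide_left_mono) auto
  with True show ?thesis by (simp add: huber_def)
next
  case False
  have "w\<^sup>2 = \<bar>w\<bar> * \<bar>w\<bar>" by (simp add: power2_eq_square)
  also have "\<dots> \<le> \<bar>w\<bar> * R" using assms by (intro mult_left_mono) auto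
  finally have "w\<^sup>2 / (2 * R) \<le> \<bar>w\<bar> / 2" using assms by (simp add: divide_simps)
  with False show ?thesis by (simp add: huber_def)
qed

lemma has_field_derivative_at_from_both_sides:
  fixes f :: "real \<Rightarrow> real"
  assumes "(f has_field_derivative D) (at x within {..x})"
    and "(f has_field_derivative D) (at x within {x..})"
  shows "(f has_field_derivative D) (at x)"
  using assms unfolding has_field_derivative_iff by (rule Lim_Un_univ) auto

lemma huber_has_derivative_nonneg:
  assumes "w \<ge> 0"
  shows "(huber has_field_derivative sat w) (at w)"
proof -
  consider "w < 1" | "w = 1" | "w > 1" by linarith
  then show ?thesis
  proof cases
    case 1
    have "((\<lambda>w. w\<^sup>2 / 2) has_field_derivative w) (at w)"
      by (auto intro!: derivative_eq_intros)
    then have "(huber has_field_derivative w) (at w)"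
      by (rule has_field_derivative_transform_within_open[where S = "{-1<..<1}"])
        (use 1 assms in \<open>auto simp: huber_def\<close>)
    with 1 assms show ?thesis by (simp add: sat_eq_self)
  next
    case 2
    have left: "((\<lambda>w. w\<^sup>2 / 2) has_field_derivative 1) (at 1 within {..1})"
      and right: "((\<lambda>w. w - 1 / 2) has_field_derivative 1) (at 1 within {1..})"
      by (auto intro!: derivative_eq_intros)
    have "(huber has_field_derivative 1) (at 1)"
    proof (rule has_field_derivative_at_from_both_sides)
      show "(huber has_field_derivative 1) (at 1 within {..1})"
        by (rule has_field_derivative_transform_within[OF left, where d = 1])
          (auto simp: huber_def dist_real_def)
      show "(huber has_field_derivative 1) (at 1 within {1..})"
        by (rule has_field_derivative_transform_within[OF right, where d = 1])
          (auto simp: huber_def dist_real_def)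
    qed
    with 2 show ?thesis by (simp add: sat_def)
  next
    case 3
    have "((\<lambda>w. w - 1 / 2) has_field_derivative 1) (at w)"
      by (auto intro!: derivative_eq_intros)
    then have "(huber has_field_derivative 1) (at w)"
      by (rule has_field_derivative_transform_within_open[where S = "{1<..}"])
        (use 3 in \<open>auto simp: huber_def\<close>)
    with 3 show ?thesis by (simp add: sat_def)
  qed
qed

lemma huber_has_derivative: "(huber has_field_derivative sat w) (at w)"
proof (cases "w \<ge> 0")
  case False
  have "((\<lambda>w. huber (- w)) has_field_derivative sat (- w) * - 1) (at w)"
    using False by (intro DERIV_chain2[where f = huber] huber_has_derivative_nonneg
        derivative_eq_intros) auto
  then show ?thesis by (simp add: huber_minus sat_minus)
qed (rule huber_has_derivative_nonneg)

lemma antimono_if_derivative_nonpos: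
  fixes f f' :: "real \<Rightarrow> real"
  assumes deriv: "\<And>t. t \<ge> a \<Longrightarrow> (f has_real_derivative f' t) (at t within {a..})"
    and nonpos: "\<And>t. t \<ge> a \<Longrightarrow> f' t \<le> 0"
    and "a \<le> s" "s \<le> t"
  shows "f t \<le> f s"
proof (rule DERIV_nonpos_imp_decreasing_open[OF \<open>s \<le> t\<close>])
  fix u assume "s < u" "u < t"
  then have "a < u" using \<open>a \<le> s\<close> by simp
  then have "at u within {a..} = at u"
    by (intro at_within_interior) (simp add: interior_Ici[of "a - 1"])
  then show "\<exists>y. (f has_real_derivative y) (at u) \<and> y \<le> 0"
    using deriv[of u] nonpos[of u] \<open>a < u\<close> by auto
next
  have "continuous_on {a..} f"
    by (rule DERIV_continuous_on[where D = f']) (use deriv in auto)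
  then show "continuous_on {s..t} f"
    by (rule continuous_on_subset) (use \<open>a \<le> s\<close> in auto)
qed

lemma exp_decay_if_derivative_le:
  fixes V V' :: "real \<Rightarrow> real"
  assumes deriv: "\<And>t. t \<ge> 0 \<Longrightarrow> (V has_real_derivative V' t) (at t within {0..})"
    and dissipation: "\<And>t. t \<ge> 0 \<Longrightarrow> V' t \<le> - \<mu> * V t"
    and "t \<ge> 0"
  shows "V t \<le> V 0 * exp (- \<mu> * t)"
proof -
  have "V t * exp (\<mu> * t) \<le> V 0 * exp (\<mu> * 0)"
  proof (rule antimono_if_derivative_nonpos[where f = "\<lambda>t. V t * exp (\<mu> * t)"])
    show "((\<lambda>t. V t * exp (\<mu> * t)) has_real_derivative (V' s + \<mu> * V s) * exp (\<mu> * s))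
        (at s within {0..})" if "s \<ge> 0" for s
      by (auto intro!: derivative_eq_intros deriv that simp: algebra_simps)
    show "(V' s + \<mu> * V s) * exp (\<mu> * s) \<le> 0" if "s \<ge> 0" for s
      using dissipation[OF that] by (simp add: mult_nonpos_nonneg)
  qed (use \<open>t \<ge> 0\<close> in auto)
  then have "V t * exp (\<mu> * t) * exp (- \<mu> * t) \<le> V 0 * exp (- \<mu> * t)"
    by (intro mult_right_mono) auto
  then show ?thesis by (simp add: mult.assoc flip: exp_add)
qed

lemma exp_decay_if_norm_squared_decays:
  fixes f :: "real \<Rightarrow> 'a::real_normed_vector"
  assumes "\<mu> > 0" "A \<ge> 0" and bound: "\<And>t. t \<ge> 0 \<Longrightarrow> (norm (f t))\<^sup>2 \<le> A * exp (- \<mu> * t)"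
  shows "\<exists>C>0. \<exists>r>0. \<forall>t\<ge>0. norm (f t) \<le> C * exp (- r * t)"
proof (intro exI conjI allI impI)
  fix t :: real assume "t \<ge> 0"
  have "(norm (f t))\<^sup>2 \<le> (sqrt A)\<^sup>2 * exp (- \<mu> * t)"
    using bound[OF \<open>t \<ge> 0\<close>] \<open>A \<ge> 0\<close> by simp
  also have "\<dots> \<le> (sqrt A + 1)\<^sup>2 * exp (- \<mu> * t)"
    using \<open>A \<ge> 0\<close> by (intro mult_right_mono power_mono) auto
  also have "\<dots> = ((sqrt A + 1) * exp (- (\<mu> / 2) * t))\<^sup>2"
    by (simp add: power_mult_distrib flip: exp_double)
  finally show "norm (f t) \<le> (sqrt A + 1) * exp (- (\<mu> / 2) * t)"
    by (rule power2_le_imp_le) (simp add: \<open>A \<ge> 0\<close>)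
qed (use assms in \<open>auto intro: add_nonneg_pos\<close>)

lemma square_diff_le: "((p::real) - q)\<^sup>2 \<le> 2 * p\<^sup>2 + 2 * q\<^sup>2"
proof -
  have "2 * p\<^sup>2 + 2 * q\<^sup>2 - (p - q)\<^sup>2 = (p + q)\<^sup>2"
    by (simp add: power2_eq_square algebra_simps)
  then show ?thesis using zero_le_power2[of "p + q"] by linarith
qed

lemma quadratic_form_ge_half_diagonal:
  fixes \<beta> y p :: real
  assumes "0 \<le> \<beta>" "\<beta> \<le> 1"
  shows "y\<^sup>2 / 2 + \<beta> * p\<^sup>2 / 2 \<le> y\<^sup>2 + \<beta> * p * y + \<beta> * p\<^sup>2"
proof -
  have "y\<^sup>2 + \<beta> * p * y + \<beta> * p\<^sup>2 - (y\<^sup>2 / 2 + \<beta> * p\<^sup>2 / 2) =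
      (y + \<beta> * p)\<^sup>2 / 2 + \<beta> * (1 - \<beta>) * p\<^sup>2 / 2"
    by (simp add: power2_eq_square field_simps)
  also have "\<dots> \<ge> 0" using assms by simp
  finally show ?thesis by simp
qed

locale saturated_feedback =
  fixes U a b :: real and x y :: "real \<Rightarrow> real"
  assumes U_pos: "U > 0" and b_less_a: "b < a" and b_pos: "b > 0"
    and x_deriv: "\<And>t. t \<ge> 0 \<Longrightarrow> (x has_real_derivative y t) (at t within {0..})"
    and y_deriv: "\<And>t. t \<ge> 0 \<Longrightarrow>
      (y has_real_derivative (- y t - U * sat (a / U * x t + b / U * y t))) (at t within {0..})"
begin

lemma a_pos: "a > 0"
  using b_less_a b_pos by simp

definition z :: "real \<Rightarrow> real" where
  "z t = a / U * x t + b / U * y t"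

definition V :: "real \<Rightarrow> real" where
  "V t = U\<^sup>2 / a * huber (z t) + (y t)\<^sup>2 / 2"

definition V' :: "real \<Rightarrow> real" where
  "V' t = - (y t)\<^sup>2 - b / a * (U * sat (z t)) * y t - b / a * (U * sat (z t))\<^sup>2"

lemma V_has_derivative:
  assumes "t \<ge> 0"
  shows "(V has_real_derivative V' t) (at t within {0..})"
proof -
  define y' where "y' = - y t - U * sat (z t)"
  have y: "(y has_real_derivative y') (at t within {0..})"
    using y_deriv[OF assms] by (simp add: y'_def z_def)
  have "(z has_real_derivative a / U * y t + b / U * y') (at t within {0..})"
    unfolding z_def[abs_def] by (intro DERIV_add DERIV_cmult x_deriv assms y)
  then have huber_z: "((\<lambda>t. huber (z t)) has_real_derivative sat (z t) * (a / U * y t + b / U * y'))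
      (at t within {0..})"
    by (rule DERIV_chain2[OF huber_has_derivative])
  have y_sq: "((\<lambda>t. (y t)\<^sup>2) has_real_derivative 2 * (y' * y t)) (at t within {0..})"
    using DERIV_power[OF y, of 2] by simp
  have "(V has_real_derivative U\<^sup>2 / a * (sat (z t) * (a / U * y t + b / U * y')) + 2 * (y' * y t) / 2)
      (at t within {0..})"
    unfolding V_def[abs_def] by (intro DERIV_add DERIV_cmult DERIV_cdivide huber_z y_sq)
  moreover have "U\<^sup>2 / a * (sat (z t) * (a / U * y t + b / U * y')) + 2 * (y' * y t) / 2 = V' t"
    using U_pos a_pos unfolding V'_def y'_def by (simp add: field_simps power2_eq_square)
  ultimately show ?thesis by simp
qed

lemma V'_le: "V' t \<le> - (y t)\<^sup>2 / 2 - b / a * (U * sat (z t))\<^sup>2 / 2"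
proof -
  have "0 \<le> b / a" "b / a \<le> 1"
    using a_pos b_pos b_less_a by auto
  from quadratic_form_ge_half_diagonal[OF this, of "y t" "U * sat (z t)"]
  show ?thesis unfolding V'_def by linarith
qed

lemma V_nonneg: "V t \<ge> 0"
  unfolding V_def using huber_nonneg[of "z t"] a_pos by (intro add_nonneg_nonneg mult_nonneg_nonneg) auto

lemma V_le_initial: "t \<ge> 0 \<Longrightarrow> V t \<le> V 0"
proof (rule antimono_if_derivative_nonpos[OF V_has_derivative])
  show "V' s \<le> 0" for s
  proof -
    have "0 \<le> b / a * (U * sat (z s))\<^sup>2 / 2"
      using a_pos b_pos by simp
    then show ?thesis
      using V'_le[of s] zero_le_power2[of "y s"] by linarith
  qed
qed auto

text \<open>The \<open>+ 1\<close> keeps the rate positive when \<open>V 0 = 0\<close>.\<close>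

definition decay_rate :: real where
  "decay_rate = min (min 1 b) (b / a * U\<^sup>2 / 2 / (V 0 + 1))"

lemma decay_rate_pos: "decay_rate > 0"
  unfolding decay_rate_def using U_pos a_pos b_pos V_nonneg[of 0] by simp

lemma V'_le_decay:
  assumes "t \<ge> 0"
  shows "V' t \<le> - decay_rate * V t"
proof (cases "\<bar>z t\<bar> \<le> 1")
  case True
  have "decay_rate * V t \<le> min 1 b * V t"
    using V_nonneg[of t] by (intro mult_right_mono) (auto simp: decay_rate_def)
  also have "\<dots> \<le> b * (U\<^sup>2 / a * huber (z t)) + 1 * ((y t)\<^sup>2 / 2)"
    unfolding V_def distrib_left using huber_nonneg[of "z t"] a_pos
    by (intro add_mono mult_right_mono) auto
  also have "\<dots> = (y t)\<^sup>2 / 2 + b / a * (U * sat (z t))\<^sup>2 / 2"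
    using True a_pos by (simp add: huber_def sat_eq_self field_simps)
  finally show ?thesis using V'_le[of t] by linarith
next
  case False
  have "V 0 + 1 \<noteq> 0"
    using V_nonneg[of 0] by linarith
  have "decay_rate * V t \<le> b / a * U\<^sup>2 / 2 / (V 0 + 1) * (V 0 + 1)"
    using V_nonneg[of t] V_le_initial[OF assms] decay_rate_pos
    by (intro mult_mono) (auto simp: decay_rate_def)
  also have "\<dots> = b / a * U\<^sup>2 / 2"
    using \<open>V 0 + 1 \<noteq> 0\<close> by simp
  also have "\<dots> = b / a * (U * sat (z t))\<^sup>2 / 2"
    using False by (simp add: sat_squared_eq_1 power_mult_distrib)
  finally show ?thesis using V'_le[of t] zero_le_power2[of "y t"] by linarith
qed

lemma V_exp_decay: "t \<ge> 0 \<Longrightarrow> V t \<le> V 0 * exp (- decay_rate * t)"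
  by (rule exp_decay_if_derivative_le[OF V_has_derivative V'_le_decay])

lemma linear_region_if_V_le: "V t \<le> U\<^sup>2 / (2 * a) \<Longrightarrow> \<bar>z t\<bar> \<le> 1"
proof (rule abs_le_1_if_huber_le)
  assume "V t \<le> U\<^sup>2 / (2 * a)"
  have "U\<^sup>2 / a * huber (z t) \<le> V t"
    unfolding V_def by simp
  also have "\<dots> \<le> U\<^sup>2 / a * (1 / 2)"
    using \<open>V t \<le> U\<^sup>2 / (2 * a)\<close> by simp
  finally show "huber (z t) \<le> 1 / 2"
    by (rule mult_left_le_imp_le) (use U_pos a_pos in simp)
qed

lemma eventually_linear_region: "\<exists>T\<ge>0. \<forall>t\<ge>T. \<bar>z t\<bar> \<le> 1"
proof -
  define L where "L = U\<^sup>2 / (2 * a)"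
  define T where "T = V 0 / (decay_rate * L)"
  have "L > 0"
    using U_pos a_pos by (simp add: L_def)
  then have "T \<ge> 0"
    using V_nonneg[of 0] decay_rate_pos by (simp add: T_def)
  moreover have "\<bar>z t\<bar> \<le> 1" if "t \<ge> T" for t
  proof -
    have "t \<ge> 0"
      using \<open>T \<ge> 0\<close> that by linarith
    have "V 0 = L * (decay_rate * T)"
      using decay_rate_pos \<open>L > 0\<close> by (simp add: T_def)
    also have "\<dots> \<le> L * exp (decay_rate * t)"
    proof (intro mult_left_mono)
      have "decay_rate * T \<le> decay_rate * t"
        using that decay_rate_pos by simp
      also have "\<dots> \<le> exp (decay_rate * t)"
        using exp_ge_add_one_self[of "decay_rate * t"] by linarith
      finally show "decay_rate * T \<le> exp (decay_rate * t)" .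
    qed (use \<open>L > 0\<close> in simp)
    finally have "V 0 * exp (- decay_rate * t) \<le> L * exp (decay_rate * t) * exp (- decay_rate * t)"
      by (intro mult_right_mono) auto
    then have "V 0 * exp (- decay_rate * t) \<le> L"
      by (simp add: mult.assoc flip: exp_add)
    with V_exp_decay[OF \<open>t \<ge> 0\<close>] show ?thesis
      by (intro linear_region_if_V_le) (simp add: L_def)
  qed
  ultimately show ?thesis by blast
qed

lemma abs_z_le: "t \<ge> 0 \<Longrightarrow> \<bar>z t\<bar> \<le> a / U\<^sup>2 * V 0 + 1"
proof -
  assume "t \<ge> 0"
  have "huber (z t) \<le> a / U\<^sup>2 * V t"
    using zero_le_power2[of "y t"] U_pos a_pos by (simp add: V_def field_simps)
  also have "\<dots> \<le> a / U\<^sup>2 * V 0"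
    using V_le_initial[OF \<open>t \<ge> 0\<close>] a_pos by (intro mult_left_mono) auto
  finally show ?thesis
    using abs_le_huber_plus_1[of "z t"] by simp
qed

lemma state_squared_le_V: "\<exists>K\<ge>0. \<forall>t\<ge>0. (x t)\<^sup>2 + (y t)\<^sup>2 \<le> K * V t"
proof (intro exI conjI allI impI)
  define R where "R = a / U\<^sup>2 * V 0 + 1"
  have "R \<ge> 1"
    using V_nonneg[of 0] a_pos by (simp add: R_def)
  then show "(4 * a * R + 4 * b\<^sup>2) / a\<^sup>2 + 2 \<ge> 0"
    using a_pos by simp
  fix t :: real assume "t \<ge> 0"
  have y_sq: "(y t)\<^sup>2 \<le> 2 * V t"
    using huber_nonneg[of "z t"] a_pos by (simp add: V_def)
  have huber_le: "huber (z t) \<le> a / U\<^sup>2 * V t"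
    using zero_le_power2[of "y t"] U_pos a_pos by (simp add: V_def field_simps)
  have "\<bar>z t\<bar> \<le> R"
    using abs_z_le[OF \<open>t \<ge> 0\<close>] by (simp add: R_def)
  from huber_ge_scaled_square[OF this \<open>R \<ge> 1\<close>] have "(z t)\<^sup>2 \<le> huber (z t) * (2 * R)"
    using \<open>R \<ge> 1\<close> by (simp add: pos_divide_le_eq)
  also have "\<dots> \<le> a / U\<^sup>2 * V t * (2 * R)"
    using huber_le \<open>R \<ge> 1\<close> by (intro mult_right_mono) auto
  finally have "U\<^sup>2 * (z t)\<^sup>2 \<le> U\<^sup>2 * (a / U\<^sup>2 * V t * (2 * R))"
    by (intro mult_left_mono) auto
  then have z_sq: "(U * z t)\<^sup>2 \<le> 2 * a * R * V t"
    using U_pos by (simp add: field_simps)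
  have "a * x t = U * z t - b * y t"
    using U_pos by (simp add: z_def field_simps)
  then have "(a * x t)\<^sup>2 \<le> 2 * (U * z t)\<^sup>2 + 2 * (b\<^sup>2 * (y t)\<^sup>2)"
    using square_diff_le[of "U * z t" "b * y t"] by (simp add: power_mult_distrib)
  also have "\<dots> \<le> (4 * a * R + 4 * b\<^sup>2) * V t"
  proof -
    have "b\<^sup>2 * (y t)\<^sup>2 \<le> b\<^sup>2 * (2 * V t)"
      using y_sq by (intro mult_left_mono) auto
    with z_sq show ?thesis by (simp add: algebra_simps)
  qed
  finally have "(x t)\<^sup>2 \<le> (4 * a * R + 4 * b\<^sup>2) / a\<^sup>2 * V t"
    using a_pos by (simp add: field_simps)
  with y_sq show "(x t)\<^sup>2 + (y t)\<^sup>2 \<le> ((4 * a * R + 4 * b\<^sup>2) / a\<^sup>2 + 2) * V t"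
    by (simp add: algebra_simps)
qed

lemma state_exp_decay: "\<exists>C>0. \<exists>r>0. \<forall>t\<ge>0. norm (x t, y t) \<le> C * exp (- r * t)"
proof -
  obtain K where "K \<ge> 0" and K: "\<And>t. t \<ge> 0 \<Longrightarrow> (x t)\<^sup>2 + (y t)\<^sup>2 \<le> K * V t"
    using state_squared_le_V by blast
  show ?thesis
  proof (rule exp_decay_if_norm_squared_decays[OF decay_rate_pos])
    show "K * V 0 \<ge> 0"
      using \<open>K \<ge> 0\<close> V_nonneg[of 0] by simp
    show "(norm (x t, y t))\<^sup>2 \<le> K * V 0 * exp (- decay_rate * t)" if "t \<ge> 0" for t
    proof -
      have "(norm (x t, y t))\<^sup>2 = (x t)\<^sup>2 + (y t)\<^sup>2"
        by (simp add: norm_Pair)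
      also have "\<dots> \<le> K * V t"
        by (rule K[OF that])
      also have "\<dots> \<le> K * (V 0 * exp (- decay_rate * t))"
        using V_exp_decay[OF that] \<open>K \<ge> 0\<close> by (rule mult_left_mono)
      finally show ?thesis
        by (simp add: mult.assoc)
    qed
  qed
qed

end

theorem lemma2:
  fixes U2 k1 k2 :: real and epsi er :: "real \<Rightarrow> real"
  assumes U2: "U2 > 0"
    and gains: "k1 > k2 - 1" "k2 - 1 > 0"
    and ode_psi: "\<And>t. t \<ge> 0 \<Longrightarrow> (epsi has_real_derivative er t) (at t within {0..})"
    and ode_r: "\<And>t. t \<ge> 0 \<Longrightarrow>
        (er has_real_derivative (- er t - U2 * sat (k1 / U2 * epsi t + (k2 - 1) / U2 * er t)))
          (at t within {0..})"
  shows "(\<exists>T\<ge>0. \<forall>t\<ge>T. \<bar>k1 / U2 * epsi t + (k2 - 1) / U2 * er t\<bar> \<le> 1) \<and>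
         (\<exists>C>0. \<exists>r>0. \<forall>t\<ge>0. norm (epsi t, er t) \<le> C * exp (- r * t))"
proof -
  interpret saturated_feedback U2 k1 "k2 - 1" epsi er
    using assms by unfold_locales
  show ?thesis
    using eventually_linear_region state_exp_decay unfolding z_def by blast
qed

end
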